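(* Consider the diploid population model of the context with environment (A), and suppose one of the following holds: (a) $0<\alpha<1$, $\zeta(N)^{3-\alpha}/N^2\to0$ and $\limsup_{N\to\infty}\varepsilon_N/c_N<\infty$; (b) $1\le\alpha<2$, $\zeta(N)/N\to0$ and $\varepsilon_N=cN^{\alpha-2}(\mathbf 1\{\kappa>2\}+\mathbf 1\{\kappa=2\}\log N)$ for a fixed $c>0$. Then $$\limsup_{N\to\infty}\frac{N}{c_N}\,\mathbb E\Big[\frac{X_1(X_1-1)(X_1-2)}{S_N^3}\mathbf 1\{S_N\ge2N\}\Big]=0.$$
   Context: Population of $2N$ diploid individuals; each generation they form $N$ uniformly random parent pairs, pair $i$ produces $X_i$ diploid potential offspring (one gene copy from each parent, chosen uniformly from that parent's two copies), $S_N=X_1+\dots+X_N$; if $S_N\ge2N$, $2N$ potential offspring are sampled uniformly without replacement to survive, otherwise the population is unchanged; generations are independent. Environment (A): fix $0<\alpha<2\le\kappa$; with probability $\varepsilon_N\in(0,1)$ all $X_i$ are i.i.d. with law $\mathbb L(\alpha,\zeta(N))$, otherwise i.i.d. with law $\mathbb L(\kappa,\zeta(N))$. Here $X\vartriangleright\mathbb L(a,\zeta(N))$ means $\mathbb P(X\le\zeta(N))=1$, remaining mass outside $\{2,\dots,\zeta(N)\}$ on $\{0,1\}$, and $g_a(k)(k^{-a}-(1+k)^{-a})\le\mathbb P(X=k)\le f_a(k)(k^{-a}-(1+k)^{-a})$ for $2\le k\le\zeta(N)$, with $g_a\le f_a$ bounded positive functions, $\inf_k\sup_{i\ge k}f_a(i)<\infty$,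 $\sup_k\inf_{i\ge k}g_a(i)>0$, limits $\lim_kf_a(k),\lim_kg_a(k)$ existing and positive; $\mathbb E[X]>2$ is assumed. $c_N=\mathbb E[\nu_1(\nu_1-1)]/(8(2N-1))$ where $\nu_1$ is the number of surviving offspring of pair 1 (the probability that two gene copies in distinct individuals derive from the same parental gene copy). *)

theory Defs
  imports "HOL-Probability.Probability"
begin

fun sum_pmf :: "nat pmf \<Rightarrow> nat \<Rightarrow> nat pmf" where
  "sum_pmf p 0 = return_pmf 0"
| "sum_pmf p (Suc n) = bind_pmf p (\<lambda>x. map_pmf ((+) x) (sum_pmf p n))"

text \<open>Expectation of h(X_1, S_N) when X_1,...,X_N are i.i.d. with law p
  (S_N = X_1 + ... + X_N).\<close>
definition iid_exp :: "nat pmf \<Rightarrow> nat \<Rightarrow> (nat \<Rightarrow> nat \<Rightarrow> real) \<Rightarrow> real" where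
  "iid_exp p N h = measure_pmf.expectation (pair_pmf p (sum_pmf p (N - 1)))
                     (\<lambda>(x, s). h x (x + s))"

definition envA_exp :: "real \<Rightarrow> nat pmf \<Rightarrow> nat pmf \<Rightarrow> nat \<Rightarrow> (nat \<Rightarrow> nat \<Rightarrow> real) \<Rightarrow> real" where
  "envA_exp eps pa pk N h = eps * iid_exp pa N h + (1 - eps) * iid_exp pk N h"

text \<open>Conditional expectation of nu_1 (nu_1 - 1) given X_1 = x, S_N = s >= 2N:
  nu_1 is hypergeometric (2N of the s potential offspring sampled uniformly
  without replacement, x of which belong to pair 1).\<close>
definition nu_ff2 :: "nat \<Rightarrow> nat \<Rightarrow> nat \<Rightarrow> real" where
  "nu_ff2 N x s = (\<Sum>k\<le>x. real k * (real k - 1) *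
      (real (x choose k) * real ((s - x) choose (2 * N - k)) / real (s choose (2 * N))))"

text \<open>Surviving offspring: if S_N < 2N the population is unchanged, nu_1 = 0.\<close>
definition cN :: "real \<Rightarrow> nat pmf \<Rightarrow> nat pmf \<Rightarrow> nat \<Rightarrow> real" where
  "cN eps pa pk N = envA_exp eps pa pk N
       (\<lambda>x s. if s \<ge> 2 * N then nu_ff2 N x s else 0) / (8 * (2 * real N - 1))"

definition law_L :: "real \<Rightarrow> nat \<Rightarrow> (nat \<Rightarrow> real) \<Rightarrow> (nat \<Rightarrow> real) \<Rightarrow> nat pmf \<Rightarrow> bool" where
  "law_L a z g f p \<longleftrightarrow> set_pmf p \<subseteq> {0..z} \<and>
     (\<forall>k. 2 \<le> k \<and> k \<le> z \<longrightarrow>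
        g k * (real k powr (-a) - (1 + real k) powr (-a)) \<le> pmf p k \<and>
        pmf p k \<le> f k * (real k powr (-a) - (1 + real k) powr (-a)))"

definition envelope :: "(nat \<Rightarrow> real) \<Rightarrow> (nat \<Rightarrow> real) \<Rightarrow> bool" where
  "envelope g f \<longleftrightarrow> (\<forall>k. 0 < g k \<and> g k \<le> f k) \<and> bounded (range f) \<and> bounded (range g)
     \<and> (\<exists>L. 0 < L \<and> f \<longlonglongrightarrow> L) \<and> (\<exists>L. 0 < L \<and> g \<longlonglongrightarrow> L)"

end

theory Submission
  imports Defs
begin

text \<open>Given \<open>X\<^sub>1 = x\<close> and \<open>S\<^sub>N = s \<ge> 2N\<close>, the number of surviving offspring of pair 1 is
  hypergeometric, with second factorial moment \<open>x(x-1)\<cdot>2N(2N-1)/(s(s-1))\<close>. Since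
  \<open>x - 2 \<le> \<zeta>(N)\<close> and \<open>s\<^sup>3 \<ge> 2N\<cdot>s(s-1)\<close>, the integrand \<open>x(x-1)(x-2)/s\<^sup>3\<close> is pointwise at most
  \<open>\<zeta>(N)/(4N\<^sup>2(2N-1))\<close> times this moment. Integrating against either environment gives
  \<open>N/c\<^sub>N \<cdot> E[\<dots>] \<le> 2\<zeta>(N)/N\<close>, which tends to 0 in both cases (in case (a) because
  \<open>\<zeta>\<^sup>2 \<le> \<zeta>\<^bsup>3-\<alpha>\<^esup>\<close>).\<close>

lemma binomial_falling2_absorption:
  fixes s m :: nat
  assumes "2 \<le> m"
  shows "m * (m - 1) * (s choose m) = s * (s - 1) * ((s - 2) choose (m - 2))"
proof (cases "2 \<le> s")
  case True
  obtain b where b: "m = Suc (Suc b)" using assms by (metis add_2_eq_Suc le_Suc_ex)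
  obtain c where c: "s = Suc (Suc c)" using True by (metis add_2_eq_Suc le_Suc_ex)
  have "Suc (Suc b) * Suc b * (Suc (Suc c) choose Suc (Suc b))
          = Suc b * (Suc (Suc b) * (Suc (Suc c) choose Suc (Suc b)))"
    by (simp only: ac_simps)
  also have "\<dots> = Suc b * (Suc (Suc c) * (Suc c choose Suc b))"
    by (simp only: Suc_times_binomial)
  also have "\<dots> = Suc (Suc c) * (Suc b * (Suc c choose Suc b))"
    by (simp only: ac_simps)
  also have "\<dots> = Suc (Suc c) * Suc c * (c choose b)"
    by (simp only: Suc_times_binomial mult.assoc)
  finally show ?thesis
    by (simp only: b c diff_Suc_Suc diff_Suc_1 diff_zero numeral_2_eq_2)
next
  case False
  then have "s = 0 \<or> s = 1" by linarith
  moreover have "s choose m = 0" using False assms by simp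
  ultimately show ?thesis by auto
qed

lemma falling2_moment_sum_ge:
  fixes x s m :: nat
  assumes "2 \<le> x" "x \<le> s" "2 \<le> m"
  shows "x * (x - 1) * ((s - 2) choose (m - 2))
           \<le> (\<Sum>k\<le>x. k * (k - 1) * ((x choose k) * ((s - x) choose (m - k))))"
proof -
  obtain a where a: "x = Suc (Suc a)" using assms(1) by (metis add_2_eq_Suc le_Suc_ex)
  obtain b where b: "m = Suc (Suc b)" using assms(3) by (metis add_2_eq_Suc le_Suc_ex)
  define f where "f k = k * (k - 1) * ((x choose k) * ((s - x) choose (m - k)))" for k
  have f_vanish: "f 0 = 0" "f (Suc 0) = 0" "x < k \<Longrightarrow> f k = 0" for k
    by (simp_all add: f_def)
  have "x - 2 = a" "s - 2 = a + (s - x)" "m - 2 = b" using a b assms(2) by simp_all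
  have "x * (x - 1) * ((s - 2) choose (m - 2))
          = (\<Sum>j\<le>b. x * (x - 1) * ((a choose j) * ((s - x) choose (b - j))))"
    by (simp only: \<open>s - 2 = a + (s - x)\<close> \<open>m - 2 = b\<close> vandermonde[symmetric] sum_distrib_left)
  also have "\<dots> = (\<Sum>j\<le>b. f (Suc (Suc j)))"
  proof (rule sum.cong[OF refl])
    fix j
    have "f (Suc (Suc j)) = Suc (Suc j) * Suc j * (x choose Suc (Suc j)) * ((s - x) choose (b - j))"
      unfolding f_def b by (simp only: diff_Suc_Suc diff_Suc_1 mult.assoc)
    also have "\<dots> = x * (x - 1) * (a choose j) * ((s - x) choose (b - j))"
      using binomial_falling2_absorption[of "Suc (Suc j)" x] \<open>x - 2 = a\<close> by simp
    finally show "x * (x - 1) * ((a choose j) * ((s - x) choose (b - j))) = f (Suc (Suc j))"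
      by (simp only: mult.assoc)
  qed
  also have "\<dots> = (\<Sum>j\<le>min a b. f (Suc (Suc j)))"
  proof (rule sum.mono_neutral_right)
    show "\<forall>j\<in>{..b} - {..min a b}. f (Suc (Suc j)) = 0"
    proof
      fix j assume "j \<in> {..b} - {..min a b}"
      then have "x < Suc (Suc j)" using a by auto
      then show "f (Suc (Suc j)) = 0" by (rule f_vanish(3))
    qed
  qed auto
  also have "\<dots> \<le> (\<Sum>j\<le>a. f (Suc (Suc j)))"
    by (intro sum_mono2) auto
  also have "\<dots> = (\<Sum>k\<le>x. f k)"
    unfolding a sum.atMost_Suc_shift by (simp add: f_vanish)
  finally show ?thesis unfolding f_def .
qed

lemma nu_ff2_eq_sum_ratio:
  "nu_ff2 N x s = real (\<Sum>k\<le>x. k * (k - 1) * ((x choose k) * ((s - x) choose (2 * N - k))))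
                    / real (s choose (2 * N))"
  unfolding nu_ff2_def of_nat_sum sum_divide_distrib
  by (intro sum.cong refl) (auto simp: of_nat_diff)

text \<open>The left-hand side is the exact second factorial moment of the hypergeometric law.
  \<^const>\<open>nu_ff2\<close> can exceed it: for \<open>k > 2N\<close> the truncated \<open>2N - k\<close> is \<open>0\<close>, so those summands
  are positive instead of vanishing.\<close>
lemma nu_ff2_ge:
  assumes "2 \<le> x" "x \<le> s" "2 * N \<le> s" "1 \<le> N"
  shows "real x * (real x - 1) * (2 * real N) * (2 * real N - 1) / (real s * (real s - 1))
           \<le> nu_ff2 N x s"
proof -
  define m where "m = 2 * N"
  have "2 \<le> m" "m \<le> s" using assms by (simp_all add: m_def)
  then have pos: "real (s choose m) \<noteq> 0" "real (s * (s - 1)) \<noteq> 0" by simp_all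
  have "real ((s - 2) choose (m - 2)) * real (s * (s - 1)) = real (m * (m - 1)) * real (s choose m)"
    unfolding of_nat_mult[symmetric] of_nat_eq_iff
    using binomial_falling2_absorption[OF \<open>2 \<le> m\<close>, of s] by (simp only: mult.commute)
  then have binomial_ratio:
    "real (m * (m - 1)) / real (s * (s - 1)) = real ((s - 2) choose (m - 2)) / real (s choose m)"
    using pos by (simp add: frac_eq_eq)
  have "real x * (real x - 1) * (2 * real N) * (2 * real N - 1) / (real s * (real s - 1))
          = real (x * (x - 1)) * (real (m * (m - 1)) / real (s * (s - 1)))"
    using assms \<open>m \<le> s\<close> by (simp add: m_def of_nat_diff)
  also have "\<dots> = real (x * (x - 1) * ((s - 2) choose (m - 2))) / real (s choose m)"
    unfolding binomial_ratio by (simp only: of_nat_mult times_divide_eq_right)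
  also have "\<dots> \<le> real (\<Sum>k\<le>x. k * (k - 1) * ((x choose k) * ((s - x) choose (m - k)))) / real (s choose m)"
    by (rule divide_right_mono[OF of_nat_mono[OF falling2_moment_sum_ge[OF assms(1,2) \<open>2 \<le> m\<close>]]]) simp
  also have "\<dots> = nu_ff2 N x s"
    by (simp only: nu_ff2_eq_sum_ratio m_def)
  finally show ?thesis .
qed

lemma nu_ff2_nonneg: "0 \<le> nu_ff2 N x s"
  unfolding nu_ff2_def
proof (intro sum_nonneg)
  fix k :: nat
  have "0 \<le> real k * (real k - 1)" by (cases k) auto
  then show "0 \<le> real k * (real k - 1) *
      (real (x choose k) * real ((s - x) choose (2 * N - k)) / real (s choose (2 * N)))"
    by simp
qed

definition ff3_kernel :: "nat \<Rightarrow> nat \<Rightarrow> nat \<Rightarrow> real" where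
  "ff3_kernel N = (\<lambda>x s. if s \<ge> 2 * N then real x * (real x - 1) * (real x - 2) / (real s) ^ 3 else 0)"

definition nu_ff2_kernel :: "nat \<Rightarrow> nat \<Rightarrow> nat \<Rightarrow> real" where
  "nu_ff2_kernel N = (\<lambda>x s. if s \<ge> 2 * N then nu_ff2 N x s else 0)"

lemma ff3_kernel_nonneg: "0 \<le> ff3_kernel N x s"
proof -
  have "0 \<le> real x * (real x - 1) * (real x - 2)"
    by (cases "x < 2") (auto simp: less_2_cases_iff)
  then show ?thesis by (simp add: ff3_kernel_def)
qed

lemma nu_ff2_kernel_nonneg: "0 \<le> nu_ff2_kernel N x s"
  by (simp add: nu_ff2_kernel_def nu_ff2_nonneg)

lemma ff3_kernel_le_nu_ff2_kernel:
  assumes "x \<le> z" "x \<le> s" "1 \<le> N"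
  shows "ff3_kernel N x s \<le> real z / (4 * (real N)\<^sup>2 * (2 * real N - 1)) * nu_ff2_kernel N x s"
proof (cases "2 \<le> x \<and> 2 * N \<le> s")
  case False
  then have "ff3_kernel N x s = 0"
    by (auto simp: ff3_kernel_def less_2_cases_iff not_le)
  moreover have "0 \<le> real z / (4 * (real N)\<^sup>2 * (2 * real N - 1)) * nu_ff2_kernel N x s"
    using assms by (intro mult_nonneg_nonneg nu_ff2_kernel_nonneg) simp
  ultimately show ?thesis by linarith
next
  case True
  then have x2: "2 \<le> x" and sN: "2 * real N \<le> real s" by simp_all
  then have "2 \<le> real s" using assms by linarith
  have xx: "0 \<le> real x * (real x - 1)" using x2 by simp
  have "real x - 2 \<le> real z" using assms by simp
  then have "real x * (real x - 1) * (real x - 2) / real s ^ 3 \<le> real x * (real x - 1) * real z / real s ^ 3"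
    using xx by (intro divide_right_mono mult_left_mono) simp_all
  also have "\<dots> \<le> real x * (real x - 1) * real z / (2 * real N * (real s * (real s - 1)))"
  proof (rule divide_left_mono)
    have "2 * real N * (real s * (real s - 1)) \<le> real s * (real s * (real s - 1))"
      using sN \<open>2 \<le> real s\<close> by (intro mult_right_mono) auto
    also have "\<dots> \<le> real s ^ 3" by (simp add: power3_eq_cube algebra_simps)
    finally show "2 * real N * (real s * (real s - 1)) \<le> real s ^ 3" .
    show "0 \<le> real x * (real x - 1) * real z" using xx by simp
    show "0 < real s ^ 3 * (2 * real N * (real s * (real s - 1)))"
      using \<open>2 \<le> real s\<close> assms by (intro mult_pos_pos) simp_all
  qed
  also have "\<dots> = real z / (4 * (real N)\<^sup>2 * (2 * real N - 1)) *
      (real x * (real x - 1) * (2 * real N) * (2 * real N - 1) / (real s * (real s - 1)))"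
  proof -
    have rearrange: "X * z' / (2 * n * d) = z' / (4 * n\<^sup>2 * e) * (X * (2 * n) * e / d)"
      if "0 < d" "0 < e" "0 < n" for z' X n d e :: real
      using that by (simp add: field_simps power2_eq_square)
    have "0 < real s * (real s - 1)" "0 < 2 * real N - 1" "0 < real N"
      using assms \<open>2 \<le> real s\<close> by simp_all
    then show ?thesis by (rule rearrange)
  qed
  also have "\<dots> \<le> real z / (4 * (real N)\<^sup>2 * (2 * real N - 1)) * nu_ff2 N x s"
    using nu_ff2_ge[OF x2 assms(2)] True assms by (intro mult_left_mono) simp_all
  finally show ?thesis using True by (simp add: ff3_kernel_def nu_ff2_kernel_def)
qed

lemma finite_set_sum_pmf: "finite (set_pmf p) \<Longrightarrow> finite (set_pmf (sum_pmf p n))"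
  by (induction n) auto

lemma iid_exp_mono:
  assumes "finite (set_pmf p)" "\<And>x s. x \<in> set_pmf p \<Longrightarrow> x \<le> s \<Longrightarrow> h x s \<le> g x s"
  shows "iid_exp p N h \<le> iid_exp p N g"
  unfolding iid_exp_def
  using assms finite_set_sum_pmf[OF assms(1)]
  by (intro integral_mono_AE integrable_measure_pmf_finite AE_pmfI) auto

lemma iid_exp_nonneg:
  assumes "\<And>x s. x \<in> set_pmf p \<Longrightarrow> x \<le> s \<Longrightarrow> 0 \<le> h x s"
  shows "0 \<le> iid_exp p N h"
  unfolding iid_exp_def using assms by (intro integral_nonneg_AE AE_pmfI) auto

lemma iid_exp_cmult: "iid_exp p N (\<lambda>x s. c * h x s) = c * iid_exp p N h"
  unfolding iid_exp_def by (simp add: case_prod_unfold)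

lemma envA_exp_mono:
  assumes "0 \<le> eps" "eps \<le> 1" "finite (set_pmf pa)" "finite (set_pmf pk)"
    and "\<And>x s. x \<in> set_pmf pa \<union> set_pmf pk \<Longrightarrow> x \<le> s \<Longrightarrow> h x s \<le> g x s"
  shows "envA_exp eps pa pk N h \<le> envA_exp eps pa pk N g"
  unfolding envA_exp_def using assms
  by (intro add_mono mult_left_mono iid_exp_mono) auto

lemma envA_exp_nonneg:
  assumes "0 \<le> eps" "eps \<le> 1"
    and "\<And>x s. x \<in> set_pmf pa \<union> set_pmf pk \<Longrightarrow> x \<le> s \<Longrightarrow> 0 \<le> h x s"
  shows "0 \<le> envA_exp eps pa pk N h"
  unfolding envA_exp_def using assms
  by (intro add_nonneg_nonneg mult_nonneg_nonneg iid_exp_nonneg) auto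

lemma envA_exp_cmult: "envA_exp eps pa pk N (\<lambda>x s. c * h x s) = c * envA_exp eps pa pk N h"
  unfolding envA_exp_def iid_exp_cmult by (simp add: algebra_simps)

lemma cN_eq: "cN eps pa pk N = envA_exp eps pa pk N (nu_ff2_kernel N) / (8 * (2 * real N - 1))"
  unfolding cN_def nu_ff2_kernel_def ..

lemma scaled_ff3_moment_nonneg:
  assumes "0 \<le> eps" "eps \<le> 1"
  shows "0 \<le> real N / cN eps pa pk N * envA_exp eps pa pk N (ff3_kernel N)"
proof (cases "N = 0")
  case False
  then have "1 \<le> real N" by simp
  moreover have "0 \<le> envA_exp eps pa pk N (nu_ff2_kernel N)" "0 \<le> envA_exp eps pa pk N (ff3_kernel N)"
    using assms by (auto intro!: envA_exp_nonneg nu_ff2_kernel_nonneg ff3_kernel_nonneg)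
  ultimately show ?thesis
    unfolding cN_eq by (intro mult_nonneg_nonneg divide_nonneg_nonneg) simp_all
qed simp

lemma scaled_ff3_moment_le:
  assumes "0 \<le> eps" "eps \<le> 1" "set_pmf pa \<subseteq> {0..z}" "set_pmf pk \<subseteq> {0..z}" "1 \<le> N"
  shows "real N / cN eps pa pk N * envA_exp eps pa pk N (ff3_kernel N) \<le> 2 * real z / real N"
proof -
  define M where "M = real z / (4 * (real N)\<^sup>2 * (2 * real N - 1))"
  define E where "E = envA_exp eps pa pk N (ff3_kernel N)"
  define D where "D = envA_exp eps pa pk N (nu_ff2_kernel N)"
  have "finite (set_pmf pa)" "finite (set_pmf pk)"
    using assms(3,4) finite_subset by blast+
  then have "E \<le> envA_exp eps pa pk N (\<lambda>x s. M * nu_ff2_kernel N x s)"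
    unfolding E_def M_def using assms
    by (intro envA_exp_mono ff3_kernel_le_nu_ff2_kernel) auto
  then have "E \<le> M * D" by (simp only: D_def envA_exp_cmult)
  have "real N / cN eps pa pk N * E = 8 * real N * (2 * real N - 1) * E / D"
    by (simp add: cN_eq D_def)
  also have "\<dots> \<le> 8 * real N * (2 * real N - 1) * M"
  proof (cases "D = 0")
    case False
    have "0 \<le> D" unfolding D_def using assms by (intro envA_exp_nonneg nu_ff2_kernel_nonneg)
    with False \<open>E \<le> M * D\<close> assms show ?thesis by (simp add: divide_le_eq mult.commute)
  qed (use assms in \<open>simp add: M_def\<close>)
  also have "\<dots> = 2 * real z / real N"
    using assms by (simp add: M_def field_simps power2_eq_square)
  finally show ?thesis unfolding E_def .
qed

lemma ratio_tendsto_zero_of_powr: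
  fixes z :: "nat \<Rightarrow> nat"
  assumes "2 \<le> r" "(\<lambda>N. real (z N) powr r / (real N)\<^sup>2) \<longlonglongrightarrow> 0"
  shows "(\<lambda>N. real (z N) / real N) \<longlonglongrightarrow> 0"
proof -
  have "(real (z N) / real N)\<^sup>2 \<le> real (z N) powr r / (real N)\<^sup>2" for N
  proof (cases "z N = 0")
    case False
    then have "real (z N) powr 2 \<le> real (z N) powr r"
      using assms(1) by (intro powr_mono) auto
    then show ?thesis using False by (simp add: powr_realpow power_divide divide_right_mono)
  qed simp
  then have "(\<lambda>N. (real (z N) / real N)\<^sup>2) \<longlonglongrightarrow> 0"
    by (intro tendsto_sandwich[OF _ _ tendsto_const assms(2)]) auto
  then have "(\<lambda>N. sqrt ((real (z N) / real N)\<^sup>2)) \<longlonglongrightarrow> sqrt 0"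
    by (rule tendsto_real_sqrt)
  then show ?thesis by simp
qed

theorem lemma8:
  fixes \<alpha> \<kappa> :: real and \<zeta> :: "nat \<Rightarrow> nat" and \<epsilon> :: "nat \<Rightarrow> real"
    and g\<alpha> f\<alpha> g\<kappa> f\<kappa> :: "nat \<Rightarrow> real" and p\<alpha> p\<kappa> :: "nat \<Rightarrow> nat pmf"
  assumes "0 < \<alpha>" "\<alpha> < 2" "2 \<le> \<kappa>"
    and "\<forall>N. 0 < \<epsilon> N \<and> \<epsilon> N < 1"
    and "envelope g\<alpha> f\<alpha>" "envelope g\<kappa> f\<kappa>"
    and "\<forall>N. law_L \<alpha> (\<zeta> N) g\<alpha> f\<alpha> (p\<alpha> N)"
    and "\<forall>N. law_L \<kappa> (\<zeta> N) g\<kappa> f\<kappa> (p\<kappa> N)"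
    and "\<forall>\<^sub>F N in sequentially. measure_pmf.expectation (p\<alpha> N) real > 2
                              \<and> measure_pmf.expectation (p\<kappa> N) real > 2"
    and "(\<alpha> < 1 \<and> ((\<lambda>N. real (\<zeta> N) powr (3 - \<alpha>) / (real N)\<^sup>2) \<longlonglongrightarrow> 0)
           \<and> (\<exists>C. \<forall>\<^sub>F N in sequentially. \<epsilon> N / cN (\<epsilon> N) (p\<alpha> N) (p\<kappa> N) N \<le> C))
       \<or> (1 \<le> \<alpha> \<and> ((\<lambda>N. real (\<zeta> N) / real N) \<longlonglongrightarrow> 0)
           \<and> (\<exists>c>0. \<forall>\<^sub>F N in sequentially.
                \<epsilon> N = c * real N powr (\<alpha> - 2) * (if \<kappa> > 2 then 1 else ln (real N))))"
  shows "limsup (\<lambda>N. ereal (real N / cN (\<epsilon> N) (p\<alpha> N) (p\<kappa> N) N *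
           envA_exp (\<epsilon> N) (p\<alpha> N) (p\<kappa> N) N
             (\<lambda>x s. if s \<ge> 2 * N
                     then real x * (real x - 1) * (real x - 2) / (real s) ^ 3 else 0))) = 0"
proof -
  have supp: "set_pmf (p\<alpha> N) \<subseteq> {0..\<zeta> N}" "set_pmf (p\<kappa> N) \<subseteq> {0..\<zeta> N}" for N
    using assms(7,8) by (auto simp: law_L_def)
  have eps: "0 \<le> \<epsilon> N" "\<epsilon> N \<le> 1" for N
    using assms(4) by (simp_all add: less_imp_le)
  have ratio: "(\<lambda>N. real (\<zeta> N) / real N) \<longlonglongrightarrow> 0"
    using assms(10) ratio_tendsto_zero_of_powr[of "3 - \<alpha>" \<zeta>] by auto
  define Q where "Q N = real N / cN (\<epsilon> N) (p\<alpha> N) (p\<kappa> N) N *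
    envA_exp (\<epsilon> N) (p\<alpha> N) (p\<kappa> N) N (ff3_kernel N)" for N
  have "Q \<longlonglongrightarrow> 0"
  proof (rule tendsto_sandwich[OF _ _ tendsto_const])
    show "\<forall>\<^sub>F N in sequentially. 0 \<le> Q N"
      unfolding Q_def using eps by (intro always_eventually allI scaled_ff3_moment_nonneg)
    show "\<forall>\<^sub>F N in sequentially. Q N \<le> 2 * (real (\<zeta> N) / real N)"
      using eventually_ge_at_top[of 1]
      by eventually_elim (use scaled_ff3_moment_le[OF eps supp] in \<open>simp add: Q_def\<close>)
    show "(\<lambda>N. 2 * (real (\<zeta> N) / real N)) \<longlonglongrightarrow> 0"
      using tendsto_mult_right_zero[OF ratio] .
  qed
  then have "limsup (\<lambda>N. ereal (Q N)) = 0"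
    by (simp add: lim_imp_Limsup tendsto_ereal zero_ereal_def)
  then show ?thesis by (simp add: Q_def ff3_kernel_def)
qed

end
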